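(* Let $\mathcal{N}$ be a Cassou-Nogu\`es ideal with $N=\#(\mathcal{O}/\mathcal{N})$, and let $U=\{u_1,\dots,u_r\}\subset\mathcal{O}$ be nonempty with each $u_j$ prime to $\mathcal{N}$. Then for every $x\in\mathcal{O}/\mathcal{N}$ and all integers $l_1,\dots,l_r\ge0$, $$\mathfrak{h}_U\Big(x+\sum_{j=1}^r l_ju_j\Big)=\mathfrak{h}_U(x)+\sum_{\emptyset\neq S\subseteq\{1,\dots,r\}}\ \sum_{\substack{0\le d_j<l_j\\ j\in S}}\mathfrak{h}_{U\setminus\{u_j\}_{j\in S}}\Big(x+\sum_{j\in S}d_ju_j\Big).$$
   Context: $F$ is a number field with ring of integers $\mathcal{O}$. A Cassou-Nogu\`es ideal is an integral ideal $\mathcal{N}\neq\mathcal{O}$ such that $\mathcal{O}/\mathcal{N}$ is cyclic as an additive group, i.e. $\mathcal{O}/\mathcal{N}\simeq\mathbf{Z}/N$ with $N=\#(\mathcal{O}/\mathcal{N})$. An element $u\in\mathcal{O}$ is prime to $\mathcal{N}$ if it is a unit modulo $\mathcal{N}$. For a nonempty $U=\{u_1,\dots,u_r\}\subset\mathcal{O}$, $\mathfrak{h}_U$ is the function on $\mathcal{O}/\mathcal{N}$ given by $\mathfrak{h}_U(a)=\frac{1}{N^{r-1}}\sum_{0\le d_1,\dots,d_r<N,\ d_1u_1+\dots+d_ru_r\equiv-a\bmod\mathcal{N}}d_1d_2\cdots d_r-\left(\frac{N-1}{2}\right)^r$, and $\mathfrak{h}_\emptyset(a)=N-1$ if $a\equiv0\bmod\mathcal{N}$,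 $\mathfrak{h}_\emptyset(a)=-1$ otherwise. *)

theory Defs
  imports Complex_Main "HOL-Library.FuncSet"
begin

text \<open>The ring of integers O is abstracted as a commutative ring 'a; an integral
ideal is a set of ring elements; residues mod the ideal are handled by congruence.\<close>

definition is_ideal :: "'a::comm_ring_1 set \<Rightarrow> bool" where
  "is_ideal I \<longleftrightarrow> 0 \<in> I \<and> (\<forall>x\<in>I. \<forall>y\<in>I. x + y \<in> I) \<and> (\<forall>x\<in>I. \<forall>a. a * x \<in> I)"

definition residue_classes :: "'a::comm_ring_1 set \<Rightarrow> 'a set set" where
  "residue_classes I = (\<lambda>x. {y. y - x \<in> I}) ` UNIV"

definition quot_card :: "'a::comm_ring_1 set \<Rightarrow> nat" where
  "quot_card I = card (residue_classes I)"

text \<open>Cassou-Nogues ideal: proper ideal with O/I finite and cyclic as additive group.\<close>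
definition cassou_nogues :: "'a::comm_ring_1 set \<Rightarrow> bool" where
  "cassou_nogues I \<longleftrightarrow> is_ideal I \<and> (1::'a) \<notin> I \<and> finite (residue_classes I) \<and>
     (\<exists>g. \<forall>x. \<exists>k::int. x - of_int k * g \<in> I)"

definition prime_to :: "'a::comm_ring_1 \<Rightarrow> 'a set \<Rightarrow> bool" where
  "prime_to u I \<longleftrightarrow> (\<exists>v. u * v - 1 \<in> I)"

text \<open>h_U for U = {u j | j \<in> J} (indexed by the finite index set J), evaluated at a.\<close>
definition hU :: "'a::comm_ring_1 set \<Rightarrow> (nat \<Rightarrow> 'a) \<Rightarrow> nat set \<Rightarrow> 'a \<Rightarrow> real" where
  "hU I u J a =
    (let N = quot_card I in
     if J = {} then (if a \<in> I then real N - 1 else -1)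
     else (\<Sum>d \<in> {d \<in> PiE J (\<lambda>_. {0..<N}). (\<Sum>j\<in>J. of_nat (d j) * u j) + a \<in> I}.
              (\<Prod>j\<in>J. real (d j))) / real N ^ (card J - 1)
          - ((real N - 1) / 2) ^ card J)"

end

theory Submission
  imports Defs
begin

(*
  Since each u_k is a unit modulo N and O/N is cyclic of order N, the congruence
  d_1 u_1 + ... + d_r u_r + a = 0 mod N with all d_j in [0, N) can be solved uniquely for d_k
  once the other d_j are chosen arbitrarily.  Replacing a by a + u_k lowers that solution by
  one, except that 0 wraps around to N - 1.  Summing the products d_1 ... d_r, the decrement
  contributes the full Gauss product (N(N-1)/2)^(r-1) and the wrap-around contributes N times
  the analogous sum for U without u_k; after normalisation this is the difference equation
  h_U(a + u_k) = h_U(a) + h_{U - u_k}(a).  Telescoping it l_k times in each coordinate k and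
  expanding over the coordinates gives the sum over nonempty subsets S.
*)

lemma
  assumes "is_ideal I"
  shows ideal_zero: "0 \<in> I"
    and ideal_add: "x \<in> I \<Longrightarrow> y \<in> I \<Longrightarrow> x + y \<in> I"
    and ideal_mult_left: "x \<in> I \<Longrightarrow> a * x \<in> I"
  using assms unfolding is_ideal_def by auto

lemma ideal_uminus: "is_ideal I \<Longrightarrow> x \<in> I \<Longrightarrow> - x \<in> I"
  using ideal_mult_left[of I x "-1"] by simp

lemma ideal_diff: "is_ideal I \<Longrightarrow> x \<in> I \<Longrightarrow> y \<in> I \<Longrightarrow> x - y \<in> I"
  using ideal_add[of I x "- y"] ideal_uminus[of I y] by simp

definition coset :: "'a::comm_ring_1 set \<Rightarrow> 'a \<Rightarrow> 'a set" where
  "coset I x = {y. y - x \<in> I}"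

lemma residue_classes_eq_range_coset: "residue_classes I = range (coset I)"
  unfolding residue_classes_def coset_def ..

lemma coset_eq_iff:
  assumes "is_ideal I"
  shows "coset I x = coset I z \<longleftrightarrow> x - z \<in> I"
proof
  assume "coset I x = coset I z"
  moreover have "x \<in> coset I x"
    using ideal_zero[OF assms] by (simp add: coset_def)
  ultimately show "x - z \<in> I"
    by (simp add: coset_def)
next
  assume "x - z \<in> I"
  then show "coset I x = coset I z"
    using ideal_add[OF assms, of _ "x - z"] ideal_diff[OF assms, of _ "x - z"]
    by (force simp: coset_def)
qed

lemma inj_on_coset_multiples:
  assumes I: "is_ideal I" and small: "\<And>k. 0 < k \<Longrightarrow> k < m \<Longrightarrow> of_nat k * v \<notin> I"
  shows "inj_on (\<lambda>k. coset I (of_nat k * v)) {0..<m}"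
proof (rule linorder_inj_onI')
  fix i j :: nat
  assume "i \<in> {0..<m}" "j \<in> {0..<m}" "i < j"
  then have "of_nat (j - i) * v \<notin> I"
    using small[of "j - i"] by auto
  moreover have "of_nat (j - i) * v = of_nat j * v - of_nat i * v"
    using \<open>i < j\<close> by (simp add: algebra_simps)
  ultimately show "coset I (of_nat i * v) \<noteq> coset I (of_nat j * v)"
    using ideal_uminus[OF I] coset_eq_iff[OF I] by fastforce
qed

lemma sum_real_atLeast0LessThan: "(\<Sum>i\<in>{0..<m}. real i) = real m * (real m - 1) / 2"
  by (induction m) (auto simp: field_simps)

lemma sum_PiE_insert:
  assumes "k \<notin> S"
  shows "(\<Sum>d\<in>PiE (insert k S) B. F d) = (\<Sum>y\<in>B k. \<Sum>g\<in>PiE S B. F (g(k := y)))"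
  unfolding PiE_insert_eq
  by (subst sum.reindex[OF inj_combinator[OF assms]]) (simp add: sum.cartesian_product case_prod_beta)

lemma sum_fun_upd_insert:
  fixes u :: "nat \<Rightarrow> 'a::comm_semiring_1"
  assumes "finite S" "k \<notin> S"
  shows "(\<Sum>j\<in>insert k S. of_nat ((g(k := e)) j) * u j) =
    (\<Sum>j\<in>S. of_nat (g j) * u j) + of_nat e * u k"
proof -
  have "(\<Sum>j\<in>S. of_nat ((g(k := e)) j) * u j) = (\<Sum>j\<in>S. of_nat (g j) * u j)"
    using assms(2) by (intro sum.cong) auto
  then show ?thesis
    using assms by (simp add: add.commute)
qed

lemma sum_fun_upd_remove:
  fixes u :: "nat \<Rightarrow> 'a::comm_semiring_1"
  assumes "finite J" "k \<in> J"
  shows "(\<Sum>j\<in>J. of_nat ((e(k := z)) j) * u j) =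
    of_nat z * u k + (\<Sum>j\<in>J - {k}. of_nat (e j) * u j)"
  by (simp add: sum.remove[OF assms])

lemma sum_subsets_expansion:
  fixes F :: "nat set \<Rightarrow> 'a::comm_semiring_1 \<Rightarrow> 'b::comm_monoid_add" and u :: "nat \<Rightarrow> 'a"
  assumes step: "\<And>J' k a l. J' \<subseteq> J \<Longrightarrow> k \<in> J' \<Longrightarrow>
      F J' (a + of_nat l * u k) = F J' a + (\<Sum>e<l. F (J' - {k}) (a + of_nat e * u k))"
    and "finite K" "K \<subseteq> J"
  shows "F J (x + (\<Sum>j\<in>K. of_nat (l j) * u j)) =
    (\<Sum>S\<in>Pow K. \<Sum>d\<in>PiE S (\<lambda>j. {0..<l j}). F (J - S) (x + (\<Sum>j\<in>S. of_nat (d j) * u j)))"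
  using \<open>finite K\<close> \<open>K \<subseteq> J\<close>
proof (induction K arbitrary: x rule: finite_induct)
  case empty
  then show ?case by simp
next
  case (insert k K)
  define T where "T S = (\<Sum>d\<in>PiE S (\<lambda>j. {0..<l j}). F (J - S) (x + (\<Sum>j\<in>S. of_nat (d j) * u j)))" for S
  have T_insert: "T (insert k S) =
      (\<Sum>d\<in>PiE S (\<lambda>j. {0..<l j}). \<Sum>e<l k.
        F (J - S - {k}) ((x + (\<Sum>j\<in>S. of_nat (d j) * u j)) + of_nat e * u k))"
    if "S \<in> Pow K" for S
  proof -
    have S: "finite S" "k \<notin> S"
      using that finite_subset[of S K] insert.hyps by auto
    show ?thesis
      unfolding T_def sum_PiE_insert[OF S(2)] sum_fun_upd_insert[OF S] Diff_insert[of J k S]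
        atLeast0LessThan add.assoc
      by (rule sum.swap)
  qed
  have "F J (x + (\<Sum>j\<in>insert k K. of_nat (l j) * u j)) =
      F J ((x + of_nat (l k) * u k) + (\<Sum>j\<in>K. of_nat (l j) * u j))"
    using insert.hyps by (simp add: add_ac)
  also have "\<dots> = (\<Sum>S\<in>Pow K. \<Sum>d\<in>PiE S (\<lambda>j. {0..<l j}).
      F (J - S) ((x + (\<Sum>j\<in>S. of_nat (d j) * u j)) + of_nat (l k) * u k))"
    using insert.IH[of "x + of_nat (l k) * u k"] insert.prems by (simp only: add_ac insert_subset)
  also have "\<dots> = (\<Sum>S\<in>Pow K. T S + T (insert k S))"
  proof (rule sum.cong[OF refl])
    fix S assume "S \<in> Pow K"
    then have JS: "J - S \<subseteq> J" "k \<in> J - S"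
      using insert by auto
    have "F (J - S) (b + of_nat (l k) * u k) =
        F (J - S) b + (\<Sum>e<l k. F (J - S - {k}) (b + of_nat e * u k))" for b
      by (rule step[OF JS])
    then show "(\<Sum>d\<in>PiE S (\<lambda>j. {0..<l j}).
        F (J - S) ((x + (\<Sum>j\<in>S. of_nat (d j) * u j)) + of_nat (l k) * u k)) = T S + T (insert k S)"
      unfolding T_insert[OF \<open>S \<in> Pow K\<close>] by (simp only: T_def sum.distrib)
  qed
  also have "\<dots> = (\<Sum>S\<in>Pow (insert k K). T S)"
  proof -
    have "inj_on (insert k) (Pow K)"
      using insert.hyps by (intro inj_onI) (metis Diff_insert_absorb PowD subsetD)
    moreover have "Pow K \<inter> insert k ` Pow K = {}"
      using insert.hyps by auto
    ultimately show ?thesis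
      using insert.hyps by (simp add: Pow_insert sum.union_disjoint sum.reindex sum.distrib)
  qed
  finally show ?case
    unfolding T_def .
qed

locale cassou_nogues_ideal =
  fixes I :: "'a::comm_ring_1 set"
  assumes cassou_nogues: "cassou_nogues I"
begin

abbreviation N :: nat where "N \<equiv> quot_card I"

lemma is_ideal: "is_ideal I"
  and finite_residue_classes: "finite (residue_classes I)"
  using cassou_nogues unfolding cassou_nogues_def by auto

lemma card_image_coset_le:
  "inj_on (\<lambda>k. coset I (of_nat k * v)) {0..<m} \<Longrightarrow> m \<le> N"
  using card_inj_on_le[OF _ _ finite_residue_classes]
  unfolding quot_card_def residue_classes_eq_range_coset by fastforce

lemma ex_pos_multiple_mem: "\<exists>m>0. of_nat m * v \<in> I"
  using card_image_coset_le[OF inj_on_coset_multiples[OF is_ideal, of "Suc N"]] by force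

lemma generator_order:
  obtains g where "\<And>x. \<exists>k::int. x - of_int k * g \<in> I" and "of_nat N * g \<in> I"
    and "\<And>k. 0 < k \<Longrightarrow> k < N \<Longrightarrow> of_nat k * g \<notin> I"
proof -
  obtain g where gen: "\<And>x. \<exists>k::int. x - of_int k * g \<in> I"
    using cassou_nogues unfolding cassou_nogues_def by auto
  define m where "m = (LEAST m. 0 < m \<and> of_nat m * g \<in> I)"
  have m: "0 < m" "of_nat m * g \<in> I"
    using LeastI_ex[OF ex_pos_multiple_mem] unfolding m_def by auto
  have small: "of_nat k * g \<notin> I" if "0 < k" "k < m" for k
    using not_less_Least[of k] that unfolding m_def by blast
  have "range (coset I) \<subseteq> (\<lambda>k. coset I (of_nat k * g)) ` {0..<m}"
  proof
    fix c assume "c \<in> range (coset I)"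
    then obtain x k where c: "c = coset I x" and k: "x - of_int k * g \<in> I"
      using gen by blast
    define s where "s = nat (k mod int m)"
    have "k = k div int m * int m + int s" "s < m"
      using m(1) by (auto simp: s_def nat_less_iff)
    then have "(of_int k :: 'a) = of_int (k div int m) * of_nat m + of_nat s"
      by (metis of_int_add of_int_mult of_int_of_nat_eq)
    then have "x - of_nat s * g = (x - of_int k * g) + of_int (k div int m) * (of_nat m * g)"
      by (simp add: algebra_simps)
    also have "\<dots> \<in> I"
      using ideal_add[OF is_ideal k ideal_mult_left[OF is_ideal m(2)]] .
    finally have "x - of_nat s * g \<in> I" .
    then show "c \<in> (\<lambda>k. coset I (of_nat k * g)) ` {0..<m}"
      using c \<open>s < m\<close> coset_eq_iff[OF is_ideal] by auto
  qed
  moreover have "inj_on (\<lambda>k. coset I (of_nat k * g)) {0..<m}"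
    using inj_on_coset_multiples[OF is_ideal, of m g] small by blast
  ultimately have "N = card ((\<lambda>k. coset I (of_nat k * g)) ` {0..<m})"
    unfolding quot_card_def residue_classes_eq_range_coset by (metis image_subsetI rangeI subset_antisym)
  also have "\<dots> = m"
    using card_image[OF \<open>inj_on _ {0..<m}\<close>] by simp
  finally have "N = m" .
  then show thesis
    using that gen m small by blast
qed

lemma quot_card_pos: "0 < N"
  using finite_residue_classes unfolding quot_card_def residue_classes_eq_range_coset
  by (simp add: card_gt_0_iff)

lemma of_nat_quot_card_mult_mem: "of_nat N * y \<in> I"
proof -
  obtain g where gen: "\<And>x. \<exists>k::int. x - of_int k * g \<in> I" and Ng: "of_nat N * g \<in> I"
    using generator_order by blast
  obtain c :: int where c: "y - of_int c * g \<in> I"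
    using gen by blast
  have "of_nat N * y = of_nat N * (y - of_int c * g) + of_int c * (of_nat N * g)"
    by (simp add: algebra_simps)
  also have "\<dots> \<in> I"
    using ideal_add[OF is_ideal ideal_mult_left[OF is_ideal c] ideal_mult_left[OF is_ideal Ng]] .
  finally show ?thesis .
qed

lemma of_nat_not_mem: "0 < k \<Longrightarrow> k < N \<Longrightarrow> (of_nat k :: 'a) \<notin> I"
  using generator_order ideal_mult_left[OF is_ideal, of "of_nat k" g for g]
  by (metis mult.commute)

lemma mult_of_nat_cong:
  assumes "s mod N = t mod N"
  shows "of_nat s * y - of_nat t * y \<in> I"
proof -
  have "(of_nat s :: 'a) = of_nat (s div N) * of_nat N + of_nat (s mod N)"
    "(of_nat t :: 'a) = of_nat (t div N) * of_nat N + of_nat (t mod N)"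
    by (metis div_mult_mod_eq of_nat_add of_nat_mult)+
  then have "of_nat s * y - of_nat t * y = (of_nat (s div N) - of_nat (t div N)) * (of_nat N * y)"
    using assms by (simp add: algebra_simps)
  also have "\<dots> \<in> I"
    using ideal_mult_left[OF is_ideal of_nat_quot_card_mult_mem] .
  finally show ?thesis .
qed

lemma prime_to_multiple_not_mem:
  assumes "prime_to v I" "0 < k" "k < N"
  shows "of_nat k * v \<notin> I"
proof
  assume kv: "of_nat k * v \<in> I"
  obtain w where w: "v * w - 1 \<in> I"
    using assms(1) unfolding prime_to_def by auto
  have "(of_nat k :: 'a) = w * (of_nat k * v) - of_nat k * (v * w - 1)"
    by (simp add: algebra_simps)
  also have "\<dots> \<in> I"
    using ideal_diff[OF is_ideal ideal_mult_left[OF is_ideal kv] ideal_mult_left[OF is_ideal w]] .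
  finally show False
    using of_nat_not_mem assms(2,3) by blast
qed

text \<open>Multiplication by a unit permutes \<open>O/I \<cong> \<int>/N\<close>.\<close>
lemma prime_to_ex1_multiple:
  assumes "prime_to v I"
  shows "\<exists>!d. d < N \<and> of_nat d * v + b \<in> I"
proof -
  let ?cls = "\<lambda>d. coset I (of_nat d * v)"
  have inj: "inj_on ?cls {0..<N}"
    using inj_on_coset_multiples[OF is_ideal prime_to_multiple_not_mem[OF assms]] .
  have "?cls ` {0..<N} = range (coset I)"
    using card_image[OF inj] finite_residue_classes
    by (intro card_subset_eq) (auto simp: quot_card_def residue_classes_eq_range_coset)
  then obtain d where "d < N" "coset I (- b) = ?cls d"
    by (metis (no_types, lifting) atLeastLessThan_iff imageE rangeI)
  then have ex: "d < N \<and> of_nat d * v + b \<in> I"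
    using coset_eq_iff[OF is_ideal] by (metis diff_minus_eq_add)
  have "d' = d" if "d' < N" "of_nat d' * v + b \<in> I" for d'
  proof -
    have "of_nat d' * v - of_nat d * v \<in> I"
      using ideal_diff[OF is_ideal that(2) conjunct2[OF ex]] by simp
    then show ?thesis
      using inj_onD[OF inj] coset_eq_iff[OF is_ideal] that(1) \<open>d < N\<close> by fastforce
  qed
  then show ?thesis
    using ex by blast
qed

definition digit :: "'a \<Rightarrow> 'a \<Rightarrow> nat" where
  "digit v b = (THE d. d < N \<and> of_nat d * v + b \<in> I)"

lemma
  assumes "prime_to v I"
  shows digit_less: "digit v b < N"
    and digit_mem: "of_nat (digit v b) * v + b \<in> I"
  using theI'[OF prime_to_ex1_multiple[OF assms, of b]] unfolding digit_def by auto

lemma digit_unique: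
  "prime_to v I \<Longrightarrow> d < N \<Longrightarrow> of_nat d * v + b \<in> I \<Longrightarrow> digit v b = d"
  unfolding digit_def by (rule the1_equality[OF prime_to_ex1_multiple]) auto

lemma digit_eq_0_iff: "prime_to v I \<Longrightarrow> digit v b = 0 \<longleftrightarrow> b \<in> I"
  using digit_mem[of v b] digit_unique[of v 0 b] quot_card_pos by auto

lemma real_digit_add_self:
  assumes v: "prime_to v I"
  shows "real (digit v (b + v)) = real (digit v b) - 1 + (if digit v b = 0 then real N else 0)"
proof -
  define d where "d = digit v b"
  have d: "d < N" "of_nat d * v + b \<in> I"
    using digit_less[OF v] digit_mem[OF v] unfolding d_def by auto
  define e where "e = (d + N - 1) mod N"
  have "(e + 1) mod N = d mod N"
    using d(1) by (cases d) (auto simp: e_def mod_Suc)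
  have "of_nat e * v + (b + v) = (of_nat (e + 1) * v - of_nat d * v) + (of_nat d * v + b)"
    by (simp add: algebra_simps)
  also have "\<dots> \<in> I"
    using ideal_add[OF is_ideal mult_of_nat_cong d(2)] \<open>(e + 1) mod N = d mod N\<close> .
  finally have "of_nat e * v + (b + v) \<in> I" .
  then have "digit v (b + v) = e"
    using digit_unique[OF v] quot_card_pos by (simp add: e_def)
  then show ?thesis
    using d(1) by (cases d) (auto simp: e_def d_def[symmetric])
qed

end

locale cassou_nogues_system = cassou_nogues_ideal I for I :: "'a::comm_ring_1 set" +
  fixes u :: "nat \<Rightarrow> 'a"
begin

definition solutions :: "nat set \<Rightarrow> 'a \<Rightarrow> (nat \<Rightarrow> nat) set" where
  "solutions J a = {d \<in> PiE J (\<lambda>_. {0..<N}). (\<Sum>j\<in>J. of_nat (d j) * u j) + a \<in> I}"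

definition weight :: "nat set \<Rightarrow> 'a \<Rightarrow> real" where
  "weight J a = (\<Sum>d\<in>solutions J a. \<Prod>j\<in>J. real (d j))"

lemma hU_eq_weight:
  "J \<noteq> {} \<Longrightarrow> hU I u J a = weight J a / real N ^ (card J - 1) - ((real N - 1) / 2) ^ card J"
  unfolding hU_def weight_def solutions_def Let_def by simp

lemma hU_empty: "hU I u {} a = (if a \<in> I then real N - 1 else - 1)"
  unfolding hU_def by simp

lemma weight_empty: "weight {} a = (if a \<in> I then 1 else 0)"
  unfolding weight_def solutions_def by auto

text \<open>Since \<open>u k\<close> is a unit, a solution is determined by its coordinates off \<open>k\<close>, which are
  arbitrary; the \<open>k\<close>-th coordinate is then the digit of the remaining sum.\<close>
lemma weight_eq_sum_digit:
  assumes J: "finite J" "k \<in> J" and unit: "prime_to (u k) I"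
  shows "weight J a = (\<Sum>e\<in>PiE (J - {k}) (\<lambda>_. {0..<N}).
           real (digit (u k) ((\<Sum>j\<in>J - {k}. of_nat (e j) * u j) + a)) * (\<Prod>j\<in>J - {k}. real (e j)))"
    (is "_ = (\<Sum>e\<in>?E. real (?dig e) * _)")
proof -
  have ins: "insert k (J - {k}) = J"
    using J by auto
  have sum_restrict: "(\<Sum>j\<in>J - {k}. of_nat (restrict d (J - {k}) j) * u j) =
      (\<Sum>j\<in>J - {k}. of_nat (d j) * u j)" for d
    by (rule sum.cong) auto
  show ?thesis
    unfolding weight_def
  proof (rule sum.reindex_bij_witness[symmetric,
        where i = "\<lambda>d. restrict d (J - {k})" and j = "\<lambda>e. e(k := ?dig e)"])
    fix e assume e: "e \<in> ?E"
    then show "restrict (e(k := ?dig e)) (J - {k}) = e"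
      by (simp add: extensional_restrict)
    have "e(k := ?dig e) \<in> PiE J (\<lambda>_. {0..<N})"
      using PiE_fun_upd[OF _ e, of "?dig e" k] digit_less[OF unit] ins by auto
    moreover have "(\<Sum>j\<in>J. of_nat ((e(k := ?dig e)) j) * u j) + a \<in> I"
      unfolding sum_fun_upd_remove[OF J] using digit_mem[OF unit] by (simp only: add.assoc)
    ultimately show "e(k := ?dig e) \<in> solutions J a"
      unfolding solutions_def by blast
    show "(\<Prod>j\<in>J. real ((e(k := ?dig e)) j)) = real (?dig e) * (\<Prod>j\<in>J - {k}. real (e j))"
      by (simp add: prod.remove[OF J])
  next
    fix d assume d: "d \<in> solutions J a"
    then have dPi: "d \<in> PiE J (\<lambda>_. {0..<N})" and dsum: "(\<Sum>j\<in>J. of_nat (d j) * u j) + a \<in> I"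
      unfolding solutions_def by auto
    show "restrict d (J - {k}) \<in> ?E"
      using dPi by (auto simp: restrict_PiE_iff)
    have "?dig (restrict d (J - {k})) = d k"
      using dsum dPi J digit_unique[OF unit]
      by (simp add: sum_restrict sum.remove[OF J] add.assoc PiE_iff)
    then show "(restrict d (J - {k}))(k := ?dig (restrict d (J - {k}))) = d"
      using dPi ins by (simp add: PiE_iff extensional_restrict)
  qed
qed

lemma weight_add_unit:
  assumes J: "finite J" "k \<in> J" and unit: "prime_to (u k) I"
  shows "weight J (a + u k) =
    weight J a - (real N * (real N - 1) / 2) ^ (card J - 1) + real N * weight (J - {k}) a"
proof -
  let ?E = "PiE (J - {k}) (\<lambda>_. {0..<N})"
  let ?b = "\<lambda>e. (\<Sum>j\<in>J - {k}. of_nat (e j) * u j) + a"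
  let ?p = "\<lambda>e. \<Prod>j\<in>J - {k}. real (e j)"
  have fin: "finite ?E"
    using J by (simp add: finite_PiE)
  have "weight J (a + u k) = (\<Sum>e\<in>?E. real (digit (u k) (?b e + u k)) * ?p e)"
    by (simp add: weight_eq_sum_digit[OF J unit] add.assoc)
  also have "\<dots> = (\<Sum>e\<in>?E. real (digit (u k) (?b e)) * ?p e) - (\<Sum>e\<in>?E. ?p e)
      + real N * (\<Sum>e\<in>?E. if digit (u k) (?b e) = 0 then ?p e else 0)"
    unfolding real_digit_add_self[OF unit] sum_distrib_left sum_subtractf[symmetric]
      sum.distrib[symmetric]
    by (intro sum.cong) (auto simp: algebra_simps)
  also have "(\<Sum>e\<in>?E. ?p e) = (\<Prod>j\<in>J - {k}. \<Sum>i\<in>{0..<N}. real i)"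
    using J by (subst prod_sum_PiE) auto
  also have "\<dots> = (real N * (real N - 1) / 2) ^ (card J - 1)"
    using J by (simp add: sum_real_atLeast0LessThan)
  also have "(\<Sum>e\<in>?E. if digit (u k) (?b e) = 0 then ?p e else 0) = weight (J - {k}) a"
    unfolding weight_def solutions_def digit_eq_0_iff[OF unit]
    by (rule sum.inter_filter[OF fin, symmetric])
  finally show ?thesis
    by (simp add: weight_eq_sum_digit[OF J unit])
qed

lemma hU_add_unit:
  assumes J: "finite J" "k \<in> J" and unit: "prime_to (u k) I"
  shows "hU I u J (a + u k) = hU I u J a + hU I u (J - {k}) a"
proof (cases "J - {k} = {}")
  case True
  then have "J = {k}"
    using J by auto
  then show ?thesis
    using weight_add_unit[OF J unit, of a]
    by (simp add: hU_eq_weight hU_empty weight_empty algebra_simps)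
next
  case False
  then obtain m where m: "card (J - {k}) = Suc m"
    using J by (metis card_gt_0_iff finite_Diff gr0_implies_Suc)
  then have cJ: "card J = Suc (Suc m)"
    using card_Suc_Diff1[OF J] by simp
  have N: "real N > 0"
    using quot_card_pos by simp
  have "hU I u J (a + u k) - hU I u J a = (weight J (a + u k) - weight J a) / real N ^ Suc m"
    using J(2) by (subst (1 2) hU_eq_weight) (auto simp: cJ diff_divide_distrib)
  also have "\<dots> =
      (real N * weight (J - {k}) a - real N ^ Suc m * ((real N - 1) / 2) ^ Suc m) / real N ^ Suc m"
    by (simp add: weight_add_unit[OF J unit] cJ power_mult_distrib[symmetric])
  also have "\<dots> = weight (J - {k}) a / real N ^ m - ((real N - 1) / 2) ^ Suc m"
    using N by (simp add: field_simps)
  also have "\<dots> = hU I u (J - {k}) a"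
    using False by (simp add: hU_eq_weight m)
  finally show ?thesis
    by simp
qed

lemma hU_add_multiple_unit:
  assumes J: "finite J" "k \<in> J" and unit: "prime_to (u k) I"
  shows "hU I u J (a + of_nat l * u k) =
    hU I u J a + (\<Sum>e<l. hU I u (J - {k}) (a + of_nat e * u k))"
proof (induction l)
  case 0
  then show ?case by simp
next
  case (Suc l)
  have "hU I u J (a + of_nat (Suc l) * u k) = hU I u J ((a + of_nat l * u k) + u k)"
    by (simp add: algebra_simps)
  also have "\<dots> = hU I u J (a + of_nat l * u k) + hU I u (J - {k}) (a + of_nat l * u k)"
    by (rule hU_add_unit[OF J unit])
  finally show ?case
    using Suc by simp
qed

end

theorem corollary2p2:
  fixes I :: "'a::comm_ring_1 set" and u :: "nat \<Rightarrow> 'a" and r :: nat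
    and x :: 'a and l :: "nat \<Rightarrow> nat"
  assumes "cassou_nogues I"
    and "r \<ge> 1"
    and "inj_on u {0..<r}"
    and "\<forall>j<r. prime_to (u j) I"
  shows "hU I u {0..<r} (x + (\<Sum>j<r. of_nat (l j) * u j)) =
         hU I u {0..<r} x +
         (\<Sum>S \<in> Pow {0..<r} - {{}}.
            \<Sum>d \<in> PiE S (\<lambda>j. {0..<l j}).
               hU I u ({0..<r} - S) (x + (\<Sum>j\<in>S. of_nat (d j) * u j)))"
proof -
  interpret cassou_nogues_system I u
    using assms(1) by unfold_locales
  have step: "hU I u J (a + of_nat m * u k) =
      hU I u J a + (\<Sum>e<m. hU I u (J - {k}) (a + of_nat e * u k))"
    if "J \<subseteq> {0..<r}" "k \<in> J" for J k a m
    using hU_add_multiple_unit[OF finite_subset[OF that(1)] that(2)] assms(4) that by auto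
  have "hU I u {0..<r} (x + (\<Sum>j\<in>{0..<r}. of_nat (l j) * u j)) =
      (\<Sum>S\<in>Pow {0..<r}. \<Sum>d\<in>PiE S (\<lambda>j. {0..<l j}).
        hU I u ({0..<r} - S) (x + (\<Sum>j\<in>S. of_nat (d j) * u j)))"
    by (rule sum_subsets_expansion[OF step]) auto
  also have "\<dots> = hU I u {0..<r} x +
      (\<Sum>S\<in>Pow {0..<r} - {{}}. \<Sum>d\<in>PiE S (\<lambda>j. {0..<l j}).
        hU I u ({0..<r} - S) (x + (\<Sum>j\<in>S. of_nat (d j) * u j)))"
    by (subst sum.remove[of _ "{}"]) auto
  finally show ?thesis
    by (simp only: lessThan_atLeast0)
qed

end
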